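(* Let $p$ be an odd prime, $m$ a positive integer, $q=p^m$. Let $l,e,r,s$ be positive integers such that $l\ge3$ is odd, $s$ is even, $\gcd(l,e)=1$, $l\mid r+es$, and $q-1=ls$. Let $\gamma$ be a primitive element of $\mathbb{F}_q$, $\xi=\gamma^s$, and $A_i=\xi^{ei}+1$ for $0\le i\le l-1$. Then $P(x)=x^r(x^{es}+1)$ is a permutation polynomial of $\mathbb{F}_q$ if and only if all of the following hold: $\gcd(r,s)=1$; $p\mid 2^s-1$; $l\nmid r$; the elements $A_1^s,A_2^s,\dots,A_{l-1}^s$ are pairwise distinct $l$-th roots of unity; and $\mathrm{Ind}_\gamma(A_k)+kr\not\equiv\mathrm{Ind}_\gamma(2)\pmod l$ for all $k=1,\dots,l-1$.
   Context: A permutation polynomial of $\mathbb{F}_q$ is one inducing a bijection of $\mathbb{F}_q$. For nonzero $a\in\mathbb{F}_q$, $\mathrm{Ind}_\gamma(a)$ is the residue class $b\bmod(q-1)$ with $a=\gamma^b$; it has a well-defined residue modulo $l$ since $l\mid q-1$. *)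

theory Defs
  imports "HOL-Computational_Algebra.Polynomial"
begin

definition perm_poly :: "'a::field poly \<Rightarrow> bool" where
  "perm_poly P \<longleftrightarrow> bij (poly P)"

definition primitive_elem :: "'a::field \<Rightarrow> bool" where
  "primitive_elem g \<longleftrightarrow> (\<forall>x. x \<noteq> 0 \<longrightarrow> (\<exists>k::nat. x = g ^ k))"

text \<open>Discrete logarithm Ind_g(a): some exponent b with a = g^b
  (determined modulo the order of g, hence modulo any l dividing q-1).\<close>
definition Ind :: "'a::field \<Rightarrow> 'a \<Rightarrow> nat" where
  "Ind g a = (SOME b. a = g ^ b)"

end

(* Put xi = gamma^s, a generator of the l-th roots of unity, and A k = xi^(e k) + 1.
   For x = gamma^t, the hypothesis l | r + e s turns P(x)^s = xi^(t r) (xi^(e t) + 1)^s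
   into A j ^ s, where l | t + j.  Hence P permutes F_q iff gcd(r, s) = 1 (otherwise P
   identifies 1 with a nontrivial d-th root of unity, d = gcd(r, s)) and j |-> A j ^ s is
   injective on {0..l-1}, i.e. a bijection onto the l-th roots of unity.  Comparing products
   over that bijection gives 2^s = 1: for odd l the product of the l-th roots of unity is 1,
   while the product of the z + 1 is 2 because squaring permutes the nontrivial roots.
   Splitting off A 0 ^ s = 2^s, and reading A k ^ s xi^(k r) = A (l - k) ^ s through
   discrete logarithms, yields the stated conditions. *)

theory Submission
  imports Defs "HOL-Computational_Algebra.Primes" "HOL-Number_Theory.Cong"
begin

lemma of_nat_card_UNIV_eq_0: "of_nat (card (UNIV :: 'a :: {finite, ring_1} set)) = (0 :: 'a)"
proof -
  have "(\<Sum>y\<in>UNIV. 1 + y) = (\<Sum>y\<in>UNIV. y :: 'a)"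
    by (rule sum.reindex_bij_witness[of _ "\<lambda>y. y - 1" "\<lambda>y. 1 + y"]) auto
  then show ?thesis
    by (simp add: sum.distrib)
qed

lemma CHAR_eq_if_card_eq_prime_power:
  fixes p m :: nat
  assumes "prime p" "m > 0" "card (UNIV :: 'a :: {finite, field} set) = p ^ m"
  shows "CHAR('a) = p"
proof -
  have "prime CHAR('a)"
    by (rule prime_CHAR_semidom) (simp add: finite_imp_CHAR_pos)
  moreover have "CHAR('a) dvd p ^ m"
    using of_nat_card_UNIV_eq_0[where 'a = 'a] assms(3) by (metis of_nat_eq_0_iff_char_dvd)
  ultimately show ?thesis
    using assms(1) by (metis prime_dvd_power primes_dvd_imp_eq)
qed

lemma finite_field_power_card_minus_one:
  fixes x :: "'a :: {finite, field}"
  assumes "x \<noteq> 0"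
  shows "x ^ (card (UNIV :: 'a set) - 1) = 1"
proof -
  have "(\<Prod>y\<in>UNIV - {0}. x * y) = (\<Prod>y\<in>UNIV - {0}. y)"
    by (rule prod.reindex_bij_witness[of _ "\<lambda>y. y / x" "\<lambda>y. x * y"]) (use assms in auto)
  moreover have "(\<Prod>y\<in>UNIV - {0}. y) \<noteq> (0 :: 'a)"
    by simp
  ultimately show ?thesis
    by (simp add: prod.distrib card_Diff_singleton)
qed

lemma power_mod_exponent:
  fixes x :: "'a :: monoid_mult"
  assumes "x ^ n = 1"
  shows "x ^ (a mod n) = x ^ a"
proof -
  have "x ^ a = x ^ (n * (a div n) + a mod n)"
    by simp
  also have "\<dots> = (x ^ n) ^ (a div n) * x ^ (a mod n)"
    by (simp only: power_add power_mult)
  also have "\<dots> = x ^ (a mod n)"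
    using assms by simp
  finally show ?thesis
    by (rule sym)
qed

lemma power_eq_power_iff_mod_order:
  fixes x :: "'a :: field"
  assumes order: "\<And>a. x ^ a = 1 \<longleftrightarrow> n dvd a" and "n > 0"
  shows "x ^ a = x ^ b \<longleftrightarrow> a mod n = b mod n"
proof -
  have "x \<noteq> 0"
    using order[of n] \<open>n > 0\<close> by (auto simp: power_0_left)
  have *: "x ^ a = x ^ b \<longleftrightarrow> a mod n = b mod n" if "a \<le> b" for a b
  proof -
    have "x ^ b = x ^ a * x ^ (b - a)"
      using that by (simp flip: power_add)
    then have "x ^ a = x ^ b \<longleftrightarrow> x ^ (b - a) = 1"
      using \<open>x \<noteq> 0\<close> by auto
    also have "\<dots> \<longleftrightarrow> a mod n = b mod n"
      using order mod_eq_dvd_iff_nat[OF that, of n] by (auto simp: eq_commute[of "a mod n"])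
    finally show ?thesis .
  qed
  show ?thesis
    using *[of a b] *[of b a] by (cases "a \<le> b") auto
qed

text \<open>In \<open>F\<^sub>2\<close> the element \<open>0\<close> is also primitive in the sense of
  \<^const>\<open>primitive_elem\<close>, as \<open>0 ^ 0 = 1\<close>.\<close>

lemma primitive_elem_nonzero:
  fixes \<gamma> :: "'a :: {finite, field}"
  assumes "primitive_elem \<gamma>" and "card (UNIV :: 'a set) > 2"
  shows "\<gamma> \<noteq> 0"
proof
  assume "\<gamma> = 0"
  have "x = 1" if "x \<noteq> 0" for x :: 'a
  proof -
    obtain k where "x = \<gamma> ^ k"
      using assms(1) \<open>x \<noteq> 0\<close> unfolding primitive_elem_def by blast
    with \<open>\<gamma> = 0\<close> \<open>x \<noteq> 0\<close> show "x = 1"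
      by (cases k) auto
  qed
  then have "UNIV \<subseteq> {0, 1 :: 'a}"
    by blast
  then have "card (UNIV :: 'a set) \<le> card {0, 1 :: 'a}"
    by (intro card_mono) auto
  with assms(2) show False
    by simp
qed

lemma primitive_elem_power_eq_1_iff:
  fixes \<gamma> :: "'a :: {finite, field}"
  assumes "primitive_elem \<gamma>" and "\<gamma> \<noteq> 0"
  shows "\<gamma> ^ a = 1 \<longleftrightarrow> card (UNIV :: 'a set) - 1 dvd a"
proof -
  define N where "N = card (UNIV :: 'a set) - 1"
  have "card {0, 1 :: 'a} \<le> card (UNIV :: 'a set)"
    by (intro card_mono) auto
  then have "N > 0"
    by (simp add: N_def)
  have "\<gamma> ^ N = 1"
    unfolding N_def by (rule finite_field_power_card_minus_one) fact
  have "UNIV - {0} \<subseteq> (\<lambda>k. \<gamma> ^ k) ` {..<N}"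
  proof
    fix x :: 'a
    assume "x \<in> UNIV - {0}"
    then obtain k where "x = \<gamma> ^ k"
      using assms(1) unfolding primitive_elem_def by blast
    then have "x = \<gamma> ^ (k mod N)"
      by (simp add: power_mod_exponent[OF \<open>\<gamma> ^ N = 1\<close>])
    then show "x \<in> (\<lambda>k. \<gamma> ^ k) ` {..<N}"
      using \<open>N > 0\<close> by auto
  qed
  then have "N \<le> card ((\<lambda>k. \<gamma> ^ k) ` {..<N})"
    using card_mono[of "(\<lambda>k. \<gamma> ^ k) ` {..<N}" "UNIV - {0}"]
    by (simp add: N_def card_Diff_singleton)
  then have inj: "inj_on (\<lambda>k. \<gamma> ^ k) {..<N}"
    using card_image_le[of "{..<N}" "\<lambda>k. \<gamma> ^ k"] by (intro eq_card_imp_inj_on) simp_all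
  show ?thesis
  proof
    assume "\<gamma> ^ a = 1"
    then have "\<gamma> ^ (a mod N) = \<gamma> ^ 0"
      by (simp add: power_mod_exponent[OF \<open>\<gamma> ^ N = 1\<close>])
    then have "a mod N = 0"
      using inj_onD[OF inj, of "a mod N" 0] \<open>N > 0\<close> by simp
    then show "card (UNIV :: 'a set) - 1 dvd a"
      by (simp add: N_def dvd_eq_mod_eq_0)
  next
    assume "card (UNIV :: 'a set) - 1 dvd a"
    then show "\<gamma> ^ a = 1"
      using \<open>\<gamma> ^ N = 1\<close> by (auto simp: N_def power_mult)
  qed
qed

lemma primitive_elem_power_Ind:
  assumes "primitive_elem \<gamma>" and "x \<noteq> 0"
  shows "\<gamma> ^ Ind \<gamma> x = x"
  using assms unfolding primitive_elem_def Ind_def by (metis (mono_tags) someI)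

lemma eq_if_powers_eq_coprime:
  fixes x y :: "'a :: field"
  assumes "x ^ m = y ^ m" "x ^ n = y ^ n" "coprime m n" "m \<noteq> 0"
  shows "x = y"
proof (cases "x = 0")
  case True
  then show ?thesis
    using assms(1,4) by (simp add: power_0_left)
next
  case False
  obtain u v where "m * u = n * v + gcd m n"
    using bezout_nat[OF assms(4)] by blast
  then have uv: "m * u = n * v + 1"
    using assms(3) by simp
  have "x ^ (m * u) = y ^ (m * u)" "x ^ (n * v) = y ^ (n * v)"
    using assms(1,2) by (simp_all add: power_mult)
  then have "x ^ (n * v) * x = x ^ (n * v) * y"
    by (simp add: uv power_add)
  then show ?thesis
    using False by simp
qed

lemma
  fixes n :: nat
  assumes "n > 0"
  shows finite_roots_of_unity: "finite {z :: 'a :: idom. z ^ n = 1}"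
    and card_roots_of_unity_le: "card {z :: 'a :: idom. z ^ n = 1} \<le> n"
proof -
  have roots: "{z :: 'a. z ^ n = 1} = {z. poly (monom 1 n - 1) z = 0}"
    by (simp add: poly_monom)
  have "coeff (monom 1 n - 1 :: 'a poly) n = 1"
    using assms by simp
  then have "monom 1 n - 1 \<noteq> (0 :: 'a poly)"
    by (metis coeff_0 zero_neq_one)
  moreover have "degree (monom 1 n - 1 :: 'a poly) \<le> n"
    by (intro degree_diff_le) (simp_all add: degree_monom_le)
  ultimately show "finite {z :: 'a. z ^ n = 1}" "card {z :: 'a. z ^ n = 1} \<le> n"
    unfolding roots using poly_roots_finite card_poly_roots_bound le_trans by blast+
qed

lemma image_eq_roots_of_unity_if_inj:
  fixes f :: "nat \<Rightarrow> 'a :: idom"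
  assumes "inj_on f {..<n}" and "\<And>j. j < n \<Longrightarrow> f j ^ n = 1" and "n > 0"
  shows "f ` {..<n} = {z. z ^ n = 1}"
proof (rule card_subset_eq)
  show fin: "finite {z :: 'a. z ^ n = 1}"
    using \<open>n > 0\<close> by (rule finite_roots_of_unity)
  show sub: "f ` {..<n} \<subseteq> {z. z ^ n = 1}"
    using assms(2) by auto
  have "card {z :: 'a. z ^ n = 1} \<le> n"
    using \<open>n > 0\<close> by (rule card_roots_of_unity_le)
  moreover have "card (f ` {..<n}) = n"
    using card_image[OF assms(1)] by simp
  moreover have "card (f ` {..<n}) \<le> card {z :: 'a. z ^ n = 1}"
    using fin sub by (rule card_mono)
  ultimately show "card (f ` {..<n}) = card {z :: 'a. z ^ n = 1}"
    by linarith
qed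

lemma root_of_unity_plus_one_nonzero:
  fixes z :: "'a :: idom"
  assumes "z ^ n = 1" and "odd n" and "(2 :: 'a) \<noteq> 0"
  shows "z + 1 \<noteq> 0"
proof
  assume "z + 1 = 0"
  then have "z = - 1"
    by (simp add: eq_neg_iff_add_eq_0)
  then have "(- 1 :: 'a) ^ n = 1"
    using assms(1) by simp
  then have "(- 1 :: 'a) = 1"
    using assms(2) by simp
  then show False
    using assms(3) by (metis add.right_inverse one_add_one)
qed

lemma prod_roots_of_unity_odd:
  assumes "odd n"
  shows "\<Prod>{z :: 'a :: field. z ^ n = 1} = 1"
proof -
  define U where "U = {z :: 'a. z ^ n = 1}"
  have "n > 0"
    using assms by (rule odd_pos)
  have "\<Prod>U = (\<Prod>z\<in>U. inverse z)"
    by (rule prod.reindex_bij_witness[of _ inverse inverse]) (auto simp: U_def power_inverse)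
  also have "\<dots> = inverse (\<Prod>U)"
    using prod_inversef[of "\<lambda>z. z" U] by (simp add: comp_def)
  finally have "\<Prod>U = inverse (\<Prod>U)" .
  moreover have "\<Prod>U \<noteq> 0"
    using finite_roots_of_unity[OF \<open>n > 0\<close>] \<open>n > 0\<close>
    by (subst prod_zero_iff) (auto simp: U_def power_0_left)
  ultimately have "\<Prod>U * \<Prod>U = 1"
    by (metis right_inverse)
  then have "\<Prod>U ^ 2 = 1 ^ 2"
    by (simp add: power2_eq_square)
  moreover have "\<Prod>U ^ n = 1 ^ n"
    by (simp add: U_def prod_power_distrib)
  ultimately show ?thesis
    using eq_if_powers_eq_coprime[of "\<Prod>U" 2 1 n] assms by (simp add: U_def)
qed

lemma prod_roots_of_unity_plus_one_odd:
  assumes "odd n"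
  shows "(\<Prod>z | z ^ n = 1. z + 1) = (2 :: 'a :: field)"
proof -
  define V where "V = {z :: 'a. z ^ n = 1} - {1}"
  have "finite V"
    using finite_roots_of_unity[OF odd_pos[OF assms]] by (simp add: V_def)
  have square_eq: "z = w" if "z ^ n = 1" "w ^ n = 1" "z ^ 2 = w ^ 2" for z w :: 'a
    using eq_if_powers_eq_coprime[of z 2 w n] that assms by simp
  have inj: "inj_on (\<lambda>z. z ^ 2) V"
  proof (rule inj_onI)
    fix z w
    assume "z \<in> V" "w \<in> V" "z ^ 2 = w ^ 2"
    then show "z = w"
      using square_eq by (simp add: V_def)
  qed
  have "z ^ 2 \<in> V" if "z \<in> V" for z
  proof -
    have "(z ^ 2) ^ n = (z ^ n) ^ 2"
      by (simp only: power_mult[symmetric] mult.commute)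
    moreover have "z ^ 2 \<noteq> 1"
      using that square_eq[of z 1] by (auto simp: V_def)
    ultimately show ?thesis
      using that by (simp add: V_def)
  qed
  then have "(\<lambda>z. z ^ 2) ` V = V"
    by (intro endo_inj_surj[OF \<open>finite V\<close> _ inj]) auto
  with inj have squares: "bij_betw (\<lambda>z. z ^ 2) V V"
    by (simp add: bij_betw_def)
  have "(\<Prod>z\<in>V. 1 - z) \<noteq> 0"
    using \<open>finite V\<close> by (subst prod_zero_iff) (auto simp: V_def)
  have "(\<Prod>z\<in>V. z + 1) * (\<Prod>z\<in>V. 1 - z) = (\<Prod>z\<in>V. (z + 1) * (1 - z))"
    by (simp only: prod.distrib)
  also have "\<dots> = (\<Prod>z\<in>V. 1 - z ^ 2)"
    by (rule prod.cong) (simp_all add: algebra_simps power2_eq_square)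
  also have "\<dots> = (\<Prod>z\<in>V. 1 - z)"
    using prod.reindex_bij_betw[OF squares, of "\<lambda>z. 1 - z"] .
  finally have "(\<Prod>z\<in>V. z + 1) = 1"
    using \<open>(\<Prod>z\<in>V. 1 - z) \<noteq> 0\<close> by simp
  moreover have "{z :: 'a. z ^ n = 1} = insert 1 V" and "1 \<notin> V"
    by (auto simp: V_def)
  ultimately show ?thesis
    using \<open>finite V\<close> by simp
qed

lemma exists_add_dvd:
  fixes l t :: nat
  assumes "l > 0"
  shows "\<exists>j<l. l dvd t + j"
proof (cases "l dvd t")
  case True
  then show ?thesis
    using assms by auto
next
  case False
  then have "0 < t mod l"
    by (simp add: dvd_eq_mod_eq_0)
  moreover have "t + (l - t mod l) = l * (t div l + 1)"
    unfolding distrib_left using mod_less_divisor[OF assms, of t] mult_div_mod_eq[of l t] by linarith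
  ultimately show ?thesis
    using assms by (intro exI[of _ "l - t mod l"]) auto
qed

lemma ball_atLeastLessThan_reflect:
  fixes l :: nat
  shows "(\<forall>k\<in>{1..<l}. Q (l - k)) \<longleftrightarrow> (\<forall>k\<in>{1..<l}. Q k)"
proof -
  have "l - k \<in> {1..<l} \<and> l - (l - k) = k" if "k \<in> {1..<l}" for k
    using that by auto
  then show ?thesis
    by metis
qed

locale binomial_permutation =
  fixes l e r s :: nat and \<gamma> :: "'a :: {finite, field}" and \<xi> :: 'a
  defines xi_def: "\<xi> \<equiv> \<gamma> ^ s"
  assumes card_UNIV: "card (UNIV :: 'a set) = l * s + 1"
    and primitive: "primitive_elem \<gamma>"
    and odd_l: "odd l" and l_ge_3: "l \<ge> 3" and s_pos: "s > 0" and r_pos: "r > 0"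
    and coprime_e_l: "coprime e l" and l_dvd: "l dvd r + e * s"
    and two_nonzero: "(2 :: 'a) \<noteq> 0"
begin

definition P :: "'a \<Rightarrow> 'a" where
  "P x = x ^ r * (x ^ (e * s) + 1)"

definition A :: "nat \<Rightarrow> 'a" where
  "A k = \<xi> ^ (e * k) + 1"

lemma l_pos: "l > 0"
  using l_ge_3 by simp

lemma gamma_nonzero: "\<gamma> \<noteq> 0"
proof (rule primitive_elem_nonzero[OF primitive])
  have "3 * 1 \<le> l * s"
    using l_ge_3 s_pos by (intro mult_mono) auto
  then show "card (UNIV :: 'a set) > 2"
    using card_UNIV by simp
qed

lemma nonzero_eq_gamma_power:
  assumes "x \<noteq> 0"
  obtains t where "x = \<gamma> ^ t"
  using primitive assms unfolding primitive_elem_def by blast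

lemma gamma_power_eq_1_iff: "\<gamma> ^ a = 1 \<longleftrightarrow> l * s dvd a"
  using primitive_elem_power_eq_1_iff[OF primitive gamma_nonzero] card_UNIV by simp

lemma power_s_gamma_power: "(\<gamma> ^ t) ^ s = \<xi> ^ t"
  by (simp add: xi_def flip: power_mult) (simp add: mult.commute)

lemma xi_power_eq_1_iff: "\<xi> ^ a = 1 \<longleftrightarrow> l dvd a"
proof -
  have "\<xi> ^ a = \<gamma> ^ (s * a)"
    by (simp add: xi_def power_mult)
  then show ?thesis
    using s_pos by (simp add: gamma_power_eq_1_iff mult.commute[of l])
qed

lemma xi_power_eq_iff: "\<xi> ^ a = \<xi> ^ b \<longleftrightarrow> a mod l = b mod l"
  using xi_power_eq_1_iff l_pos by (rule power_eq_power_iff_mod_order)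

lemma xi_power_root_of_unity: "(\<xi> ^ k) ^ l = 1"
  by (simp add: xi_power_eq_1_iff flip: power_mult)

lemma A_zero: "A 0 = 2"
  by (simp add: A_def)

lemma A_nonzero: "A k \<noteq> 0"
  unfolding A_def using xi_power_root_of_unity odd_l two_nonzero
  by (rule root_of_unity_plus_one_nonzero)

lemma A_power_s_root_of_unity: "(A k ^ s) ^ l = 1"
  using finite_field_power_card_minus_one[OF A_nonzero, of k] card_UNIV
  by (simp flip: power_mult add: mult.commute)

lemma A_power_s_shift:
  assumes "l dvd k + j"
  shows "\<xi> ^ (k * r) * A k ^ s = A j ^ s"
proof -
  have "\<xi> ^ (e * k) * \<xi> ^ (e * j) = 1"
    using assms by (simp add: xi_power_eq_1_iff flip: power_add distrib_left)
  then have "A k = \<xi> ^ (e * k) * A j"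
    by (simp add: A_def distrib_left)
  then have "A k ^ s = \<xi> ^ (k * (e * s)) * A j ^ s"
    by (simp add: power_mult_distrib flip: power_mult) (simp add: mult_ac)
  moreover have "\<xi> ^ (k * r) * \<xi> ^ (k * (e * s)) = 1"
    using l_dvd by (simp add: xi_power_eq_1_iff flip: power_add distrib_left)
  ultimately show ?thesis
    by (metis mult.assoc mult_1)
qed

lemma P_gamma_power_s:
  assumes "l dvd t + j"
  shows "P (\<gamma> ^ t) ^ s = A j ^ s"
proof -
  have "((\<gamma> ^ t) ^ r) ^ s = \<xi> ^ (t * r)" "(\<gamma> ^ t) ^ (e * s) = \<xi> ^ (e * t)"
    by (simp_all add: xi_def mult_ac flip: power_mult)
  then have "P (\<gamma> ^ t) ^ s = \<xi> ^ (t * r) * A t ^ s"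
    by (simp add: P_def A_def power_mult_distrib)
  also have "\<dots> = A j ^ s"
    using assms by (rule A_power_s_shift)
  finally show ?thesis .
qed

lemma P_eq_0_iff: "P x = 0 \<longleftrightarrow> x = 0"
proof (cases "x = 0")
  case True
  then show ?thesis
    using r_pos by (simp add: P_def)
next
  case False
  then obtain t where "x = \<gamma> ^ t"
    by (rule nonzero_eq_gamma_power)
  then have "x ^ (e * s) + 1 = A t"
    by (simp add: A_def xi_def mult_ac flip: power_mult)
  then show ?thesis
    using False A_nonzero by (simp add: P_def)
qed

lemma coprime_r_s_if_inj_P:
  assumes "inj P"
  shows "coprime r s"
proof (rule ccontr)
  define d where "d = gcd r s"
  assume "\<not> coprime r s"
  then have "d \<noteq> 1"
    by (simp add: d_def coprime_iff_gcd_eq_1)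
  moreover have "d dvd r" "d dvd s"
    by (simp_all add: d_def)
  ultimately have "s div d < s" "0 < s div d"
    using s_pos by (auto intro: div_less_dividend dest: dvd_imp_le)
  define \<omega> where "\<omega> = \<gamma> ^ (l * (s div d))"
  have "\<omega> \<noteq> 1"
    using \<open>s div d < s\<close> \<open>0 < s div d\<close> l_pos
    by (auto simp: \<omega>_def gamma_power_eq_1_iff dest: dvd_imp_le)
  have "\<omega> ^ n = 1" if "d dvd n" for n
  proof -
    have "\<omega> ^ d = 1"
      using \<open>d dvd s\<close> by (simp add: \<omega>_def gamma_power_eq_1_iff flip: power_mult)
    with that show ?thesis
      by (auto elim!: dvdE simp: power_mult)
  qed
  then have "P \<omega> = P 1"
    using \<open>d dvd r\<close> \<open>d dvd s\<close> by (simp add: P_def)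
  with \<open>\<omega> \<noteq> 1\<close> show False
    using assms by (simp add: inj_eq)
qed

lemma inj_A_power_s_if_surj_P:
  assumes "surj P"
  shows "inj_on (\<lambda>j. A j ^ s) {..<l}"
proof (rule eq_card_imp_inj_on)
  have "(\<lambda>k. \<xi> ^ k) ` {..<l} \<subseteq> (\<lambda>j. A j ^ s) ` {..<l}"
  proof (rule subsetI)
    fix y
    assume "y \<in> (\<lambda>k. \<xi> ^ k) ` {..<l}"
    then obtain k where "y = \<xi> ^ k"
      by blast
    obtain x where x: "\<gamma> ^ k = P x"
      using assms unfolding surj_def by blast
    have "x \<noteq> 0"
    proof
      assume "x = 0"
      then have "\<gamma> ^ k = 0"
        using x P_eq_0_iff by simp
      then show False
        using gamma_nonzero by simp
    qed
    then obtain t where "x = \<gamma> ^ t"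
      by (rule nonzero_eq_gamma_power)
    obtain j where "j < l" "l dvd t + j"
      using exists_add_dvd[OF l_pos] by blast
    have "y = P x ^ s"
      using x \<open>y = \<xi> ^ k\<close> by (simp add: power_s_gamma_power flip: x)
    also have "\<dots> = A j ^ s"
      using \<open>x = \<gamma> ^ t\<close> \<open>l dvd t + j\<close> by (simp add: P_gamma_power_s)
    finally show "y \<in> (\<lambda>j. A j ^ s) ` {..<l}"
      using \<open>j < l\<close> by blast
  qed
  then have "card ((\<lambda>k. \<xi> ^ k) ` {..<l}) \<le> card ((\<lambda>j. A j ^ s) ` {..<l})"
    by (intro card_mono) simp_all
  moreover have "inj_on (\<lambda>k. \<xi> ^ k) {..<l}"
    by (rule inj_onI) (simp add: xi_power_eq_iff)
  ultimately have "l \<le> card ((\<lambda>j. A j ^ s) ` {..<l})"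
    by (simp add: card_image)
  then show "card ((\<lambda>j. A j ^ s) ` {..<l}) = card {..<l}"
    using card_image_le[of "{..<l}" "\<lambda>j. A j ^ s"] by simp
qed simp

lemma inj_P_if:
  assumes "coprime r s" and inj: "inj_on (\<lambda>j. A j ^ s) {..<l}"
  shows "inj P"
proof (rule injI)
  fix x y
  assume "P x = P y"
  show "x = y"
  proof (cases "x = 0 \<or> y = 0")
    case True
    then show ?thesis
      using \<open>P x = P y\<close> P_eq_0_iff by metis
  next
    case False
    then obtain a b where a: "x = \<gamma> ^ a" and b: "y = \<gamma> ^ b"
      by (metis nonzero_eq_gamma_power)
    obtain i j where "i < l" "l dvd a + i" "j < l" "l dvd b + j"
      using exists_add_dvd[OF l_pos] by metis
    then have "A i ^ s = A j ^ s"
      using \<open>P x = P y\<close> a b P_gamma_power_s by metis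
    then have "i = j"
      using inj \<open>i < l\<close> \<open>j < l\<close> by (auto dest: inj_onD)
    then have "[a + i = b + i] (mod l)"
      using \<open>l dvd a + i\<close> \<open>l dvd b + j\<close> by (simp add: cong_def dvd_eq_mod_eq_0)
    then have "[a = b] (mod l)"
      by (simp add: cong_add_rcancel_nat)
    then have "a mod l = b mod l"
      by (simp add: cong_def)
    then have "x ^ s = y ^ s"
      using a b by (simp add: power_s_gamma_power xi_power_eq_iff)
    then have "x ^ (e * s) = y ^ (e * s)"
      by (simp add: power_mult mult.commute[of e])
    then have "x ^ r = y ^ r"
      using \<open>P x = P y\<close> P_eq_0_iff False by (auto simp: P_def)
    then show "x = y"
      using eq_if_powers_eq_coprime \<open>x ^ s = y ^ s\<close> assms(1) r_pos by blast
  qed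
qed

lemma bij_P_iff: "bij P \<longleftrightarrow> coprime r s \<and> inj_on (\<lambda>j. A j ^ s) {..<l}"
  using coprime_r_s_if_inj_P inj_A_power_s_if_surj_P inj_P_if finite_UNIV_inj_surj[of P]
  by (auto simp: bij_def)

lemma two_power_s_if_inj_A:
  assumes inj: "inj_on (\<lambda>j. A j ^ s) {..<l}"
  shows "(2 :: 'a) ^ s = 1"
proof -
  have "(\<xi> ^ e) ^ a = 1 \<longleftrightarrow> l dvd a" for a
    using coprime_e_l
    by (simp add: xi_power_eq_1_iff coprime_dvd_mult_right_iff coprime_commute flip: power_mult)
  then have inj_e: "inj_on (\<lambda>j. \<xi> ^ (e * j)) {..<l}"
    using l_pos by (intro inj_onI) (simp add: power_mult power_eq_power_iff_mod_order)
  then have "(\<lambda>j. \<xi> ^ (e * j)) ` {..<l} = {z. z ^ l = 1}"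
    using xi_power_root_of_unity l_pos by (rule image_eq_roots_of_unity_if_inj)
  then have "(\<Prod>j<l. A j) = 2"
    using prod.reindex[OF inj_e, of "\<lambda>z. z + 1"]
      prod_roots_of_unity_plus_one_odd[where 'a = 'a, OF odd_l]
    by (simp add: A_def)
  moreover have "(\<Prod>j<l. A j ^ s) = 1"
  proof -
    have "(\<lambda>j. A j ^ s) ` {..<l} = {z. z ^ l = 1}"
      using inj A_power_s_root_of_unity l_pos by (rule image_eq_roots_of_unity_if_inj)
    then show ?thesis
      using prod.reindex[OF inj, of "\<lambda>z. z"] prod_roots_of_unity_odd[where 'a = 'a, OF odd_l]
      by simp
  qed
  ultimately show ?thesis
    by (metis prod_power_distrib)
qed

lemma not_l_dvd_r_if_inj_A:
  assumes inj: "inj_on (\<lambda>j. A j ^ s) {..<l}"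
  shows "\<not> l dvd r"
proof
  assume "l dvd r"
  then have "\<xi> ^ (1 * r) = 1"
    by (simp add: xi_power_eq_1_iff)
  moreover have "\<xi> ^ (1 * r) * A 1 ^ s = A (l - 1) ^ s"
    using l_pos by (intro A_power_s_shift) simp
  ultimately have "A 1 ^ s = A (l - 1) ^ s"
    by simp
  then have "1 = l - 1"
    using inj_onD[OF inj] l_ge_3 by simp
  with l_ge_3 show False
    by simp
qed

lemma inj_A_power_s_iff:
  "inj_on (\<lambda>j. A j ^ s) {..<l} \<longleftrightarrow>
     inj_on (\<lambda>j. A j ^ s) {1..<l} \<and> (\<forall>k\<in>{1..<l}. A k ^ s \<noteq> 2 ^ s)"
proof -
  have "{..<l} = insert 0 {1..<l}"
    using l_pos by auto
  then show ?thesis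
    by (auto simp: A_zero image_iff)
qed

lemma Ind_condition_iff:
  assumes "k \<in> {1..<l}"
  shows "(Ind \<gamma> (A k) + k * r) mod l = Ind \<gamma> 2 mod l \<longleftrightarrow> A (l - k) ^ s = 2 ^ s"
proof -
  have "\<xi> ^ (Ind \<gamma> (A k) + k * r) = \<xi> ^ (k * r) * A k ^ s"
    using power_s_gamma_power[of "Ind \<gamma> (A k)"]
    by (simp add: primitive_elem_power_Ind[OF primitive A_nonzero] power_add mult.commute)
  also have "\<dots> = A (l - k) ^ s"
    using assms by (intro A_power_s_shift) simp
  finally have "\<xi> ^ (Ind \<gamma> (A k) + k * r) = A (l - k) ^ s" .
  moreover have "\<xi> ^ Ind \<gamma> 2 = 2 ^ s"
    using power_s_gamma_power[of "Ind \<gamma> 2"]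
    by (simp add: primitive_elem_power_Ind[OF primitive two_nonzero])
  ultimately show ?thesis
    by (simp flip: xi_power_eq_iff)
qed

lemma bij_P_iff_conditions:
  "bij P \<longleftrightarrow>
     coprime r s \<and> (2 :: 'a) ^ s = 1 \<and> \<not> l dvd r \<and>
     (\<forall>i\<in>{1..<l}. (A i ^ s) ^ l = 1) \<and> inj_on (\<lambda>i. A i ^ s) {1..<l} \<and>
     (\<forall>k\<in>{1..<l}. \<not> (Ind \<gamma> (A k) + k * r) mod l = Ind \<gamma> 2 mod l)"
proof -
  have "(\<forall>k\<in>{1..<l}. \<not> (Ind \<gamma> (A k) + k * r) mod l = Ind \<gamma> 2 mod l) \<longleftrightarrow>
      (\<forall>k\<in>{1..<l}. A (l - k) ^ s \<noteq> 2 ^ s)"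
    using Ind_condition_iff by blast
  also have "\<dots> \<longleftrightarrow> (\<forall>k\<in>{1..<l}. A k ^ s \<noteq> 2 ^ s)"
    by (rule ball_atLeastLessThan_reflect)
  finally show ?thesis
    using bij_P_iff inj_A_power_s_iff two_power_s_if_inj_A not_l_dvd_r_if_inj_A
      A_power_s_root_of_unity
    by blast
qed

end

theorem theorem4p3:
  fixes p m l e r s :: nat and \<gamma> :: "'a::{finite,field}"
  assumes "prime p" and "odd p" and "m > 0" and "card (UNIV :: 'a set) = p ^ m"
    and "l > 0" and "e > 0" and "r > 0" and "s > 0"
    and "l \<ge> 3" and "odd l" and "even s" and "gcd l e = 1"
    and "l dvd r + e * s" and "card (UNIV :: 'a set) - 1 = l * s"
    and "primitive_elem \<gamma>"
  shows "perm_poly (monom 1 r * (monom 1 (e * s) + 1) :: 'a poly) \<longleftrightarrow>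
     (gcd r s = 1 \<and> p dvd 2 ^ s - 1 \<and> \<not> l dvd r \<and>
      (\<forall>i\<in>{1..l-1}. ((((\<gamma> ^ s) ^ (e * i) + 1) ^ s) ^ l = 1)) \<and>
      inj_on (\<lambda>i. ((\<gamma> ^ s) ^ (e * i) + 1) ^ s) {1..l-1} \<and>
      (\<forall>k\<in>{1..l-1}. \<not> (Ind \<gamma> ((\<gamma> ^ s) ^ (e * k) + 1) + k * r) mod l = Ind \<gamma> 2 mod l))"
proof -
  have char: "CHAR('a) = p"
    using assms(1,3,4) by (rule CHAR_eq_if_card_eq_prime_power)
  have "\<not> p dvd 2"
    using primes_dvd_imp_eq[OF assms(1) two_is_prime_nat] assms(2) by auto
  then have "(2 :: 'a) \<noteq> 0"
    using of_nat_eq_0_iff_char_dvd[of 2, where 'a = 'a] char by simp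
  have two_power: "p dvd 2 ^ s - 1 \<longleftrightarrow> (2 :: 'a) ^ s = 1"
    using of_nat_eq_0_iff_char_dvd[of "2 ^ s - 1", where 'a = 'a] char by (simp add: of_nat_diff)
  have "card (UNIV :: 'a set) = l * s + 1"
    using assms(14) finite_UNIV_card_ge_0[where 'a = 'a] by simp
  then interpret binomial_permutation l e r s \<gamma> "\<gamma> ^ s"
    using assms \<open>(2 :: 'a) \<noteq> 0\<close>
    by unfold_locales (simp_all add: coprime_iff_gcd_eq_1 gcd.commute)
  have "poly (monom 1 r * (monom 1 (e * s) + 1)) = P"
    by (simp add: fun_eq_iff P_def poly_monom)
  moreover have "{1..l-1} = {1..<l}"
    by auto
  ultimately show ?thesis
    using bij_P_iff_conditions unfolding perm_poly_def two_power coprime_iff_gcd_eq_1 A_def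
    by simp
qed

end
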